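(* Let $(G_n)_{n\in\mathbb{N}}$ be an $\mathrm{FO}$-convergent sequence of finite graphs with a modeling limit $L$, and let $r$ be an algebraic vertex of $L$. Then there is a sequence $(r_n)_{n\in\mathbb{N}}$ with $r_n \in V(G_n)$ such that $(G_n, r_n)$ $\mathrm{FO}$-converges to $(L, r)$, i.e. $\lim_{n\to\infty} \langle \phi, (G_n,r_n)\rangle = \langle \phi, (L,r)\rangle$ for every first-order formula $\phi$ in the language of rooted graphs.
   Context: Graphs are considered as first-order structures in the language with one binary (edge) relation. $\mathrm{FO}_p$ denotes the set of first-order formulas with $p$ free variables in the language of graphs. For $\phi\in\mathrm{FO}_p$ and a structure $G$, $\phi(G)=\{\mathbf{v}\in V(G)^p : G\models\phi(\mathbf{v})\}$. The Stone pairing of $\phi \in \mathrm{FO}_p$, $p\ge 1$, with a finite graph $G$ is $\langle \phi, G\rangle = |\phi(G)|/|V(G)|^p$, the probability that a uniformly random $p$-tuple of vertices satisfies $\phi$; for a sentence ($p=0$), $\langle\phi,G\rangle=1$ if $G\models\phi$ and $0$ otherwise. A sequence of finite graphs $(G_n)$ is $\mathrm{FO}$-convergent if $(\langle\phi,G_n\rangle)$ converges for every formula $\phi$. A modeling is a graph $L$ whose vertex set is a standard Borel space equipped with a probability measure $\nu$ such that every first-order definable set $\phi(L)\subseteq V(L)^p$ is measurable (in the product $\sigma$-algebra); one sets $\langle\phi,L\rangle=\nu^{\otimes p}(\phi(L))$ (and $1$ or $0$ for sentences according to truth). $L$ is a modeling limit of $(G_n)$ if $\lim_n\langle\phi,G_n\rangle=\langle\phi,L\rangle$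 for all formulas $\phi$. The language of rooted graphs extends the language of graphs by a constant symbol $\mathrm{Root}$; $(G,r)$ denotes $G$ with $\mathrm{Root}$ interpreted as the vertex $r$, and Stone pairings of formulas of this extended language with $(G,r)$ or $(L,r)$ are defined in the same way. A formula $\xi(x)$ with one free variable is algebraic in $L$ if $\xi(L)$ is finite; a vertex of $L$ is algebraic if it belongs to $\xi(L)$ for some formula $\xi(x)$ (of the language of graphs) algebraic in $L$. *)

theory Defs
  imports "HOL-Probability.Probability"
begin

text \<open>Terms: variables (indexed by natural numbers) or the constant Root.
  Formulas of the language of rooted graphs; the language of graphs is the
  fragment not using Root.\<close>

datatype tm = Var nat | Root

datatype fo =
    FFalse
  | FEq tm tm
  | FAdj tm tm
  | FNot fo
  | FAnd fo fo
  | FOr fo fo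
  | FEx nat fo
  | FAll nat fo

fun tm_vars :: "tm \<Rightarrow> nat set" where
  "tm_vars (Var i) = {i}"
| "tm_vars Root = {}"

fun fv :: "fo \<Rightarrow> nat set" where
  "fv FFalse = {}"
| "fv (FEq s t) = tm_vars s \<union> tm_vars t"
| "fv (FAdj s t) = tm_vars s \<union> tm_vars t"
| "fv (FNot \<phi>) = fv \<phi>"
| "fv (FAnd \<phi> \<psi>) = fv \<phi> \<union> fv \<psi>"
| "fv (FOr \<phi> \<psi>) = fv \<phi> \<union> fv \<psi>"
| "fv (FEx x \<phi>) = fv \<phi> - {x}"
| "fv (FAll x \<phi>) = fv \<phi> - {x}"

fun tm_root :: "tm \<Rightarrow> bool" where
  "tm_root (Var i) = False"
| "tm_root Root = True"

fun uses_root :: "fo \<Rightarrow> bool" where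
  "uses_root FFalse = False"
| "uses_root (FEq s t) = (tm_root s \<or> tm_root t)"
| "uses_root (FAdj s t) = (tm_root s \<or> tm_root t)"
| "uses_root (FNot \<phi>) = uses_root \<phi>"
| "uses_root (FAnd \<phi> \<psi>) = (uses_root \<phi> \<or> uses_root \<psi>)"
| "uses_root (FOr \<phi> \<psi>) = (uses_root \<phi> \<or> uses_root \<psi>)"
| "uses_root (FEx x \<phi>) = uses_root \<phi>"
| "uses_root (FAll x \<phi>) = uses_root \<phi>"

definition FO :: "nat \<Rightarrow> fo set" where
  "FO p = {\<phi>. \<not> uses_root \<phi> \<and> fv \<phi> \<subseteq> {..<p}}"

definition FO_rooted :: "nat \<Rightarrow> fo set" where
  "FO_rooted p = {\<phi>. fv \<phi> \<subseteq> {..<p}}"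

fun tm_eval :: "'a \<Rightarrow> (nat \<Rightarrow> 'a) \<Rightarrow> tm \<Rightarrow> 'a" where
  "tm_eval r a (Var i) = a i"
| "tm_eval r a Root = r"

fun sat :: "'a set \<Rightarrow> ('a \<Rightarrow> 'a \<Rightarrow> bool) \<Rightarrow> 'a \<Rightarrow> (nat \<Rightarrow> 'a) \<Rightarrow> fo \<Rightarrow> bool" where
  "sat V E r a FFalse = False"
| "sat V E r a (FEq s t) = (tm_eval r a s = tm_eval r a t)"
| "sat V E r a (FAdj s t) = E (tm_eval r a s) (tm_eval r a t)"
| "sat V E r a (FNot \<phi>) = (\<not> sat V E r a \<phi>)"
| "sat V E r a (FAnd \<phi> \<psi>) = (sat V E r a \<phi> \<and> sat V E r a \<psi>)"
| "sat V E r a (FOr \<phi> \<psi>) = (sat V E r a \<phi> \<or> sat V E r a \<psi>)"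
| "sat V E r a (FEx x \<phi>) = (\<exists>v\<in>V. sat V E r (a(x := v)) \<phi>)"
| "sat V E r a (FAll x \<phi>) = (\<forall>v\<in>V. sat V E r (a(x := v)) \<phi>)"

definition graph :: "'a set \<Rightarrow> ('a \<Rightarrow> 'a \<Rightarrow> bool) \<Rightarrow> bool" where
  "graph V E \<longleftrightarrow> (\<forall>u\<in>V. \<forall>v\<in>V. E u v \<longrightarrow> E v u) \<and> (\<forall>v\<in>V. \<not> E v v)"

definition finite_graph :: "'a set \<Rightarrow> ('a \<Rightarrow> 'a \<Rightarrow> bool) \<Rightarrow> bool" where
  "finite_graph V E \<longleftrightarrow> graph V E \<and> finite V \<and> V \<noteq> {}"

text \<open>The definable set phi(G) in V^p, p-tuples represented as functions on {..<p}
  (extensional, i.e. undefined outside {..<p}).\<close>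
definition defset :: "'a set \<Rightarrow> ('a \<Rightarrow> 'a \<Rightarrow> bool) \<Rightarrow> 'a \<Rightarrow> nat \<Rightarrow> fo \<Rightarrow> (nat \<Rightarrow> 'a) set" where
  "defset V E r p \<phi> = {xs \<in> PiE {..<p} (\<lambda>_. V). sat V E r xs \<phi>}"

text \<open>Stone pairing with a finite (rooted) graph; Root interpreted as r
  (irrelevant for formulas of the plain language of graphs).\<close>
definition stone_fin :: "'a set \<Rightarrow> ('a \<Rightarrow> 'a \<Rightarrow> bool) \<Rightarrow> 'a \<Rightarrow> nat \<Rightarrow> fo \<Rightarrow> real" where
  "stone_fin V E r p \<phi> =
     (if p = 0 then (if sat V E r (\<lambda>_. undefined) \<phi> then 1 else 0)
      else real (card (defset V E r p \<phi>)) / real (card V) ^ p)"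

definition Polish_space :: "'a topology \<Rightarrow> bool" where
  "Polish_space T \<longleftrightarrow> completely_metrizable_space T \<and> separable_space T"

definition standard_borel :: "'a measure \<Rightarrow> bool" where
  "standard_borel M \<longleftrightarrow>
     (\<exists>T. Polish_space T \<and> topspace T = space M \<and>
          sets M = sigma_sets (space M) {U. openin T U})"

definition modeling :: "'b measure \<Rightarrow> ('b \<Rightarrow> 'b \<Rightarrow> bool) \<Rightarrow> bool" where
  "modeling M E \<longleftrightarrow> prob_space M \<and> standard_borel M \<and> graph (space M) E \<and>
     (\<forall>p. \<forall>\<phi>\<in>FO p. defset (space M) E undefined p \<phi> \<in> sets (PiM {..<p} (\<lambda>_. M)))"

definition stone_mod :: "'b measure \<Rightarrow> ('b \<Rightarrow> 'b \<Rightarrow> bool) \<Rightarrow> 'b \<Rightarrow> nat \<Rightarrow> fo \<Rightarrow> real" where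
  "stone_mod M E r p \<phi> =
     (if p = 0 then (if sat (space M) E r (\<lambda>_. undefined) \<phi> then 1 else 0)
      else measure (PiM {..<p} (\<lambda>_. M)) (defset (space M) E r p \<phi>))"

definition FO_convergent :: "(nat \<Rightarrow> 'a set) \<Rightarrow> (nat \<Rightarrow> 'a \<Rightarrow> 'a \<Rightarrow> bool) \<Rightarrow> bool" where
  "FO_convergent V E \<longleftrightarrow>
     (\<forall>p. \<forall>\<phi>\<in>FO p. convergent (\<lambda>n. stone_fin (V n) (E n) undefined p \<phi>))"

definition modeling_limit ::
  "'b measure \<Rightarrow> ('b \<Rightarrow> 'b \<Rightarrow> bool) \<Rightarrow> (nat \<Rightarrow> 'a set) \<Rightarrow> (nat \<Rightarrow> 'a \<Rightarrow> 'a \<Rightarrow> bool) \<Rightarrow> bool" where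
  "modeling_limit M EL V E \<longleftrightarrow> modeling M EL \<and>
     (\<forall>p. \<forall>\<phi>\<in>FO p.
        (\<lambda>n. stone_fin (V n) (E n) undefined p \<phi>) \<longlonglongrightarrow> stone_mod M EL undefined p \<phi>)"

definition algebraic_vertex :: "'b set \<Rightarrow> ('b \<Rightarrow> 'b \<Rightarrow> bool) \<Rightarrow> 'b \<Rightarrow> bool" where
  "algebraic_vertex V E r \<longleftrightarrow>
     (\<exists>\<xi>\<in>FO 1. finite {v\<in>V. sat V E undefined (\<lambda>_. v) \<xi>} \<and>
                r \<in> {v\<in>V. sat V E undefined (\<lambda>_. v) \<xi>})"

end

(*
  Let \<xi> be a unary formula defining a finite set \<xi>(L) that contains r. A first-order sentence
  says that \<xi> has at most |\<xi>(L)| solutions, so eventually |\<xi>(G_n)| \<le> |\<xi>(L)|. For rooted formulas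
  \<psi>_1, ..., \<psi>_k the number of y \<in> \<xi>(G) satisfying \<psi>_j(y, x_j) for all j is captured by
  first-order counting formulas in the disjoint blocks of variables x_j; integrating them over
  the blocks shows that the moments \<Sum>_{y \<in> \<xi>(G_n)} \<Prod>_j \<langle>\<psi>_j, (G_n, y)\<rangle> converge to the
  corresponding moments over \<xi>(L). Since \<xi>(L) is finite, there is a nonnegative polynomial F
  that vanishes at every Stone-pairing vector of \<xi>(L) different from that of r but not at r;
  comparing the moments of F with those of F times the squared distance to the vector of r shows
  that some y \<in> \<xi>(G_n) approximates r on any finite set of rooted formulas. A diagonal
  argument over an enumeration of all rooted formulas then produces the roots r_n.
*)

theory Submission
  imports Defs
begin

section \<open>Renaming and counting quantifiers\<close>

fun rename_tm :: "(nat \<Rightarrow> nat) \<Rightarrow> tm \<Rightarrow> tm \<Rightarrow> tm" where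
  "rename_tm \<sigma> \<rho> (Var i) = Var (\<sigma> i)"
| "rename_tm \<sigma> \<rho> Root = \<rho>"

fun rename :: "(nat \<Rightarrow> nat) \<Rightarrow> tm \<Rightarrow> fo \<Rightarrow> fo" where
  "rename \<sigma> \<rho> FFalse = FFalse"
| "rename \<sigma> \<rho> (FEq s t) = FEq (rename_tm \<sigma> \<rho> s) (rename_tm \<sigma> \<rho> t)"
| "rename \<sigma> \<rho> (FAdj s t) = FAdj (rename_tm \<sigma> \<rho> s) (rename_tm \<sigma> \<rho> t)"
| "rename \<sigma> \<rho> (FNot \<phi>) = FNot (rename \<sigma> \<rho> \<phi>)"
| "rename \<sigma> \<rho> (FAnd \<phi> \<psi>) = FAnd (rename \<sigma> \<rho> \<phi>) (rename \<sigma> \<rho> \<psi>)"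
| "rename \<sigma> \<rho> (FOr \<phi> \<psi>) = FOr (rename \<sigma> \<rho> \<phi>) (rename \<sigma> \<rho> \<psi>)"
| "rename \<sigma> \<rho> (FEx x \<phi>) = FEx (\<sigma> x) (rename \<sigma> \<rho> \<phi>)"
| "rename \<sigma> \<rho> (FAll x \<phi>) = FAll (\<sigma> x) (rename \<sigma> \<rho> \<phi>)"

lemma tm_eval_rename_tm:
  "tm_eval r a (rename_tm \<sigma> \<rho> t) = tm_eval (tm_eval r a \<rho>) (a \<circ> \<sigma>) t"
  by (cases t) auto

lemma tm_eval_fun_upd_notin: "i \<notin> tm_vars t \<Longrightarrow> tm_eval r (a(i := v)) t = tm_eval r a t"
  by (cases t) auto

lemma fun_upd_comp_inj: "inj \<sigma> \<Longrightarrow> a(\<sigma> x := v) \<circ> \<sigma> = (a \<circ> \<sigma>)(x := v)"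
  by (auto simp: fun_eq_iff inj_eq)

lemma sat_rename:
  assumes "inj \<sigma>" and "tm_vars \<rho> \<inter> range \<sigma> = {}"
  shows "sat V E r a (rename \<sigma> \<rho> \<phi>) = sat V E (tm_eval r a \<rho>) (a \<circ> \<sigma>) \<phi>"
proof (induction \<phi> arbitrary: a)
  case (FEx x \<phi>)
  have "\<sigma> x \<notin> tm_vars \<rho>"
    using assms(2) by blast
  then show ?case
    by (simp only: rename.simps sat.simps FEx.IH fun_upd_comp_inj[OF assms(1)]
        tm_eval_fun_upd_notin[OF \<open>\<sigma> x \<notin> tm_vars \<rho>\<close>])
next
  case (FAll x \<phi>)
  have "\<sigma> x \<notin> tm_vars \<rho>"
    using assms(2) by blast
  then show ?case
    by (simp only: rename.simps sat.simps FAll.IH fun_upd_comp_inj[OF assms(1)]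
        tm_eval_fun_upd_notin[OF \<open>\<sigma> x \<notin> tm_vars \<rho>\<close>])
qed (auto simp: tm_eval_rename_tm)

lemma tm_eval_cong: "(\<And>i. i \<in> tm_vars t \<Longrightarrow> a i = b i) \<Longrightarrow> tm_eval r a t = tm_eval r b t"
  by (cases t) auto

lemma sat_fv_cong: "(\<And>i. i \<in> fv \<phi> \<Longrightarrow> a i = b i) \<Longrightarrow> sat V E r a \<phi> = sat V E r b \<phi>"
proof (induction \<phi> arbitrary: a b)
  case (FEx x \<phi>)
  have "sat V E r (a(x := v)) \<phi> = sat V E r (b(x := v)) \<phi>" for v
    by (rule FEx.IH) (use FEx.prems in auto)
  then show ?case by simp
next
  case (FAll x \<phi>)
  have "sat V E r (a(x := v)) \<phi> = sat V E r (b(x := v)) \<phi>" for v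
    by (rule FAll.IH) (use FAll.prems in auto)
  then show ?case by simp
next
  case (FEq s t)
  then show ?case
    using tm_eval_cong[of s a b r] tm_eval_cong[of t a b r] by auto
next
  case (FAdj s t)
  then show ?case
    using tm_eval_cong[of s a b r] tm_eval_cong[of t a b r] by auto
next
  case (FNot \<phi>)
  then show ?case
    by (metis fv.simps(4) sat.simps(4))
next
  case (FAnd \<phi> \<psi>)
  then show ?case
    by (metis UnCI fv.simps(5) sat.simps(5))
next
  case (FOr \<phi> \<psi>)
  then show ?case
    by (metis UnCI fv.simps(6) sat.simps(6))
qed simp

lemma sat_no_root: "\<not> uses_root \<phi> \<Longrightarrow> sat V E r a \<phi> = sat V E r' a \<phi>"
proof (induction \<phi> arbitrary: a)
  case (FEq s t)
  then show ?case by (cases s; cases t) auto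
next
  case (FAdj s t)
  then show ?case by (cases s; cases t) auto
qed auto

lemma sat_FO_1:
  assumes "\<xi> \<in> FO 1"
  shows "sat V E r a \<xi> = sat V E undefined (\<lambda>_. a 0) \<xi>"
proof -
  have "sat V E r a \<xi> = sat V E undefined a \<xi>"
    using assms by (intro sat_no_root) (simp add: FO_def)
  also have "\<dots> = sat V E undefined (\<lambda>_. a 0) \<xi>"
    using assms by (intro sat_fv_cong) (auto simp: FO_def)
  finally show ?thesis .
qed

lemma fv_rename: "inj \<sigma> \<Longrightarrow> fv (rename \<sigma> \<rho> \<phi>) \<subseteq> \<sigma> ` fv \<phi> \<union> tm_vars \<rho>"
proof (induction \<phi>)
  case (FEq s t) then show ?case by (cases s; cases t) auto
next
  case (FAdj s t) then show ?case by (cases s; cases t) auto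
qed (auto simp: inj_eq)

lemma uses_root_rename_Var: "\<not> uses_root (rename \<sigma> (Var z) \<phi>)"
proof (induction \<phi>)
  case (FEq s t) then show ?case by (cases s; cases t) auto
next
  case (FAdj s t) then show ?case by (cases s; cases t) auto
qed auto

lemma uses_root_rename_Root: "uses_root (rename \<sigma> Root \<phi>) = uses_root \<phi>"
proof (induction \<phi>)
  case (FEq s t) then show ?case by (cases s; cases t) auto
next
  case (FAdj s t) then show ?case by (cases s; cases t) auto
qed auto

lemma finite_fv: "finite (fv \<phi>)"
proof -
  have "finite (tm_vars t)" for t by (cases t) auto
  then show ?thesis by (induction \<phi>) auto
qed

definition fresh_var :: "nat \<Rightarrow> fo \<Rightarrow> nat" where
  "fresh_var y \<psi> = Suc (Max (insert y (fv \<psi>)))"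

lemma fresh_var: "fresh_var y \<psi> \<noteq> y" "fresh_var y \<psi> \<notin> fv \<psi>"
proof -
  have "v \<le> Max (insert y (fv \<psi>))" if "v \<in> insert y (fv \<psi>)" for v
    using that finite_fv[of \<psi>] by simp
  then show "fresh_var y \<psi> \<noteq> y" "fresh_var y \<psi> \<notin> fv \<psi>"
    unfolding fresh_var_def by (metis Suc_n_not_le_n insertCI)+
qed

text \<open>Since \<open>z\<close> is fresh, renaming along the transposition of \<open>y\<close> and \<open>z\<close> substitutes \<open>z\<close>
  for \<open>y\<close>.\<close>
fun at_least :: "nat \<Rightarrow> nat \<Rightarrow> fo \<Rightarrow> fo" where
  "at_least y 0 \<psi> = FNot FFalse"
| "at_least y (Suc c) \<psi> =
    (let z = fresh_var y \<psi>
     in FEx z (FAnd (rename (Transposition.transpose y z) Root \<psi>)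
                    (at_least y c (FAnd \<psi> (FNot (FEq (Var y) (Var z)))))))"

lemma fv_at_least: "fv (at_least y c \<psi>) \<subseteq> fv \<psi> - {y}"
proof (induction c arbitrary: \<psi>)
  case (Suc c)
  define z where "z = fresh_var y \<psi>"
  have "fv (rename (Transposition.transpose y z) Root \<psi>) \<subseteq> insert z (fv \<psi> - {y})"
    using fv_rename[OF inj_transpose, of y z Root \<psi>] fresh_var[of y \<psi>]
    by (auto simp: z_def Transposition.transpose_def)
  moreover have "fv (at_least y c (FAnd \<psi> (FNot (FEq (Var y) (Var z))))) \<subseteq> insert z (fv \<psi>) - {y}"
    using Suc.IH by fastforce
  ultimately show ?case
    by (auto simp: Let_def z_def[symmetric])
qed simp

lemma uses_root_at_least: "\<not> uses_root \<psi> \<Longrightarrow> \<not> uses_root (at_least y c \<psi>)"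
  by (induction c arbitrary: \<psi>) (auto simp: Let_def uses_root_rename_Root)

lemma sat_at_least:
  assumes "finite {v\<in>V. sat V E r (a(y := v)) \<psi>}"
  shows "sat V E r a (at_least y c \<psi>) \<longleftrightarrow> c \<le> card {v\<in>V. sat V E r (a(y := v)) \<psi>}"
  using assms
proof (induction c arbitrary: \<psi> a)
  case (Suc c)
  define z where "z = fresh_var y \<psi>"
  define S where "S = {v\<in>V. sat V E r (a(y := v)) \<psi>}"
  have "z \<noteq> y" "z \<notin> fv \<psi>"
    using fresh_var by (auto simp: z_def)
  have swapped: "sat V E r (a(z := w)) (rename (Transposition.transpose y z) Root \<psi>)
      \<longleftrightarrow> sat V E r (a(y := w)) \<psi>" for w
  proof -
    have "sat V E r (a(z := w)) (rename (Transposition.transpose y z) Root \<psi>)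
        = sat V E r (a(z := w) \<circ> Transposition.transpose y z) \<psi>"
      by (simp add: sat_rename)
    also have "\<dots> = sat V E r (a(y := w)) \<psi>"
      using \<open>z \<noteq> y\<close> \<open>z \<notin> fv \<psi>\<close> by (intro sat_fv_cong) (auto simp: Transposition.transpose_def)
    finally show ?thesis .
  qed
  have rest: "{v\<in>V. sat V E r ((a(z := w))(y := v)) (FAnd \<psi> (FNot (FEq (Var y) (Var z))))}
      = S - {w}" for w
  proof -
    have "sat V E r ((a(z := w))(y := v)) \<psi> = sat V E r (a(y := v)) \<psi>" for v
      using \<open>z \<noteq> y\<close> \<open>z \<notin> fv \<psi>\<close> by (intro sat_fv_cong) auto
    then show ?thesis
      using \<open>z \<noteq> y\<close> by (auto simp: S_def)
  qed
  have "finite S"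
    using Suc.prems unfolding S_def .
  have "sat V E r a (at_least y (Suc c) \<psi>) \<longleftrightarrow> (\<exists>w\<in>S. c \<le> card (S - {w}))"
  proof -
    have "sat V E r (a(z := w)) (at_least y c (FAnd \<psi> (FNot (FEq (Var y) (Var z)))))
        \<longleftrightarrow> c \<le> card (S - {w})" for w
      using Suc.IH[of "a(z := w)" "FAnd \<psi> (FNot (FEq (Var y) (Var z)))", unfolded rest]
        \<open>finite S\<close> by blast
    then show ?thesis
      by (auto simp: Let_def z_def[symmetric] swapped S_def)
  qed
  also have "\<dots> \<longleftrightarrow> Suc c \<le> card S"
    using \<open>finite S\<close> card_gt_0_iff[of S] by (auto simp: card_Diff_singleton Suc_le_eq)
  finally show ?case
    unfolding S_def .
qed simp

fun conj_list :: "fo list \<Rightarrow> fo" where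
  "conj_list [] = FNot FFalse"
| "conj_list (\<phi> # \<phi>s) = FAnd \<phi> (conj_list \<phi>s)"

lemma sat_conj_list: "sat V E r a (conj_list \<phi>s) \<longleftrightarrow> (\<forall>\<phi>\<in>set \<phi>s. sat V E r a \<phi>)"
  by (induction \<phi>s) auto

lemma fv_conj_list: "fv (conj_list \<phi>s) = (\<Union>\<phi>\<in>set \<phi>s. fv \<phi>)"
  by (induction \<phi>s) auto

lemma uses_root_conj_list: "uses_root (conj_list \<phi>s) \<longleftrightarrow> (\<exists>\<phi>\<in>set \<phi>s. uses_root \<phi>)"
  by (induction \<phi>s) auto

section \<open>Moment formulas\<close>

definition definable_vertices :: "'a set \<Rightarrow> ('a \<Rightarrow> 'a \<Rightarrow> bool) \<Rightarrow> fo \<Rightarrow> 'a set" where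
  "definable_vertices V E \<xi> = {v \<in> V. sat V E undefined (\<lambda>_. v) \<xi>}"

definition block :: "nat \<Rightarrow> nat \<Rightarrow> (nat \<Rightarrow> 'b) \<Rightarrow> nat \<Rightarrow> 'b" where
  "block N q X = (\<lambda>i\<in>{..<q}. X (N + i))"

definition block_var :: "nat \<Rightarrow> nat \<Rightarrow> nat \<Rightarrow> nat \<Rightarrow> nat" where
  "block_var P N j i = (if i < P then j * P + i else N + 1 + i)"

text \<open>With \<open>N = length \<psi>s * P\<close>, the variables below \<open>N\<close> form \<open>length \<psi>s\<close> blocks of \<open>P\<close>
  variables, variable \<open>N\<close> carries a root \<open>y\<close>, and the variables above \<open>N\<close> only absorb bound
  variables. The formula says that \<open>\<xi>(y)\<close> holds and that block \<open>j\<close> satisfies \<open>\<psi>s ! j\<close> with root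
  \<open>y\<close>. Integrating the number of such \<open>y\<close> over the blocks yields the moment
  \<open>\<Sum>y\<in>\<xi>(L). \<Prod>j. \<langle>\<psi>s ! j, (L, y)\<rangle>\<close>.\<close>
definition joint_formula :: "fo \<Rightarrow> nat \<Rightarrow> fo list \<Rightarrow> fo" where
  "joint_formula \<xi> P \<psi>s =
    (let N = length \<psi>s * P
     in FAnd (rename (\<lambda>i. if i = 0 then N else N + 1 + i) Root \<xi>)
          (conj_list (map (\<lambda>j. rename (block_var P N j) (Var N) (\<psi>s ! j)) [0..<length \<psi>s])))"

definition moment_formula :: "fo \<Rightarrow> nat \<Rightarrow> fo list \<Rightarrow> nat \<Rightarrow> fo" where
  "moment_formula \<xi> P \<psi>s c = at_least (length \<psi>s * P) c (joint_formula \<xi> P \<psi>s)"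

lemma block_index_less:
  fixes j s i P :: nat
  assumes "j < s" and "i < P"
  shows "j * P + i < s * P"
proof -
  have "j * P + i < Suc j * P"
    using assms(2) by simp
  also have "\<dots> \<le> s * P"
    using assms(1) by (intro mult_le_mono1) simp
  finally show ?thesis .
qed

lemma inj_block_var: "j < s \<Longrightarrow> inj (block_var P (s * P) j)"
  using mult_le_mono1[of "Suc j" s P] by (auto simp: inj_def block_var_def split: if_splits)

lemma block_var_avoids_root:
  assumes "j < s"
  shows "tm_vars (Var (s * P)) \<inter> range (block_var P (s * P) j) = {}"
proof -
  have "s * P \<noteq> block_var P (s * P) j i" for i
    using block_index_less[OF assms, of i P] by (auto simp: block_var_def)
  then show ?thesis
    by auto
qed

lemma sat_joint_formula:
  assumes \<xi>: "\<xi> \<in> FO 1" and \<psi>s: "\<And>\<psi>. \<psi> \<in> set \<psi>s \<Longrightarrow> fv \<psi> \<subseteq> {..<P}"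
  shows "sat V E r (X(length \<psi>s * P := y)) (joint_formula \<xi> P \<psi>s) \<longleftrightarrow>
    sat V E undefined (\<lambda>_. y) \<xi> \<and> (\<forall>j<length \<psi>s. sat V E y (block (j * P) P X) (\<psi>s ! j))"
proof -
  define N where "N = length \<psi>s * P"
  define \<rho> where "\<rho> = (\<lambda>i::nat. if i = 0 then N else N + 1 + i)"
  have "inj \<rho>"
    by (auto simp: inj_def \<rho>_def)
  have "sat V E r (X(N := y)) (rename \<rho> Root \<xi>) \<longleftrightarrow> sat V E r (X(N := y) \<circ> \<rho>) \<xi>"
    by (simp add: sat_rename[OF \<open>inj \<rho>\<close>])
  also have "\<dots> \<longleftrightarrow> sat V E undefined (\<lambda>_. y) \<xi>"
    using sat_FO_1[OF \<xi>, of V E r "X(N := y) \<circ> \<rho>"] by (simp add: \<rho>_def)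
  finally have "sat V E r (X(N := y)) (rename \<rho> Root \<xi>) \<longleftrightarrow> sat V E undefined (\<lambda>_. y) \<xi>" .
  moreover have "sat V E r (X(N := y)) (rename (block_var P N j) (Var N) (\<psi>s ! j))
      \<longleftrightarrow> sat V E y (block (j * P) P X) (\<psi>s ! j)" if "j < length \<psi>s" for j
  proof -
    have "sat V E r (X(N := y)) (rename (block_var P N j) (Var N) (\<psi>s ! j))
        \<longleftrightarrow> sat V E y (X(N := y) \<circ> block_var P N j) (\<psi>s ! j)"
      unfolding N_def
      by (simp add: sat_rename[OF inj_block_var[OF that, of P]
            block_var_avoids_root[OF that, of P]])
    also have "\<dots> \<longleftrightarrow> sat V E y (block (j * P) P X) (\<psi>s ! j)"
    proof (rule sat_fv_cong)
      fix i assume "i \<in> fv (\<psi>s ! j)"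
      then have "i < P"
        using \<psi>s[OF nth_mem[OF that]] by auto
      then show "(X(N := y) \<circ> block_var P N j) i = block (j * P) P X i"
        using block_index_less[OF that \<open>i < P\<close>] by (simp add: block_var_def block_def N_def)
    qed
    finally show ?thesis .
  qed
  ultimately show ?thesis
    unfolding joint_formula_def Let_def N_def[symmetric] \<rho>_def[symmetric]
    by (auto simp: sat_conj_list)
qed

lemma moment_formula_FO:
  assumes \<xi>: "\<xi> \<in> FO 1" and \<psi>s: "\<And>\<psi>. \<psi> \<in> set \<psi>s \<Longrightarrow> fv \<psi> \<subseteq> {..<P}"
  shows "moment_formula \<xi> P \<psi>s c \<in> FO (length \<psi>s * P)"
proof -
  define N where "N = length \<psi>s * P"
  define \<rho> where "\<rho> = (\<lambda>i::nat. if i = 0 then N else N + 1 + i)"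
  have "inj \<rho>"
    by (auto simp: inj_def \<rho>_def)
  have root_part: "fv (rename \<rho> Root \<xi>) \<subseteq> insert N {..<N}"
    using fv_rename[OF \<open>inj \<rho>\<close>, of Root \<xi>] \<xi> by (auto simp: FO_def \<rho>_def)
  have "fv (rename (block_var P N j) (Var N) (\<psi>s ! j)) \<subseteq> insert N {..<N}" if "j < length \<psi>s" for j
  proof -
    have "block_var P N j ` fv (\<psi>s ! j) \<subseteq> {..<N}"
      using \<psi>s[OF nth_mem[OF that]] block_index_less[OF that] by (auto simp: block_var_def N_def)
    then have "block_var P N j ` fv (\<psi>s ! j) \<union> tm_vars (Var N) \<subseteq> insert N {..<N}"
      by auto
    then show ?thesis
      using fv_rename[OF inj_block_var[OF that, of P], of "Var N" "\<psi>s ! j"] unfolding N_def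
      by (rule order_trans[rotated])
  qed
  then have block_part:
    "fv (conj_list (map (\<lambda>j. rename (block_var P N j) (Var N) (\<psi>s ! j)) [0..<length \<psi>s]))
      \<subseteq> insert N {..<N}"
    unfolding fv_conj_list by (simp add: UN_subset_iff)
  have "fv (moment_formula \<xi> P \<psi>s c) \<subseteq> fv (joint_formula \<xi> P \<psi>s) - {N}"
    unfolding moment_formula_def N_def by (rule fv_at_least)
  also have "\<dots> \<subseteq> insert N {..<N} - {N}"
    using root_part block_part
    by (intro Diff_mono) (simp_all add: joint_formula_def Let_def N_def[symmetric] \<rho>_def[symmetric])
  also have "\<dots> \<subseteq> {..<N}"
    by auto
  finally have "fv (moment_formula \<xi> P \<psi>s c) \<subseteq> {..<N}" .
  moreover have "\<not> uses_root (joint_formula \<xi> P \<psi>s)"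
    using \<xi> by (simp add: joint_formula_def Let_def uses_root_conj_list uses_root_rename_Root
        uses_root_rename_Var FO_def)
  then have "\<not> uses_root (moment_formula \<xi> P \<psi>s c)"
    unfolding moment_formula_def by (rule uses_root_at_least)
  ultimately show ?thesis
    by (simp add: FO_def N_def)
qed

section \<open>Definable sets in product measures\<close>

lemma stone_mod_eq_measure:
  "stone_mod M E r p \<phi> = measure (PiM {..<p} (\<lambda>_. M)) (defset (space M) E r p \<phi>)"
proof (cases "p = 0")
  case True
  have "defset (space M) E r 0 \<phi>
      = (if sat (space M) E r (\<lambda>_. undefined) \<phi> then {\<lambda>_. undefined} else {})"
    by (auto simp: defset_def)
  then show ?thesis
    using True by (simp add: stone_mod_def PiM_empty)
qed (simp add: stone_mod_def)

lemma sum_measure_eq_if_sum_indicator_eq: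
  assumes "finite_measure N" and "finite C" and "finite D"
    and "\<And>c. c \<in> C \<Longrightarrow> A c \<in> sets N" and "\<And>d. d \<in> D \<Longrightarrow> B d \<in> sets N"
    and "\<And>x. x \<in> space N \<Longrightarrow> (\<Sum>c\<in>C. indicator (A c) x) = (\<Sum>d\<in>D. indicator (B d) x :: real)"
  shows "(\<Sum>c\<in>C. measure N (A c)) = (\<Sum>d\<in>D. measure N (B d))"
proof -
  interpret finite_measure N by fact
  have "(\<Sum>c\<in>C. measure N (A c)) = integral\<^sup>L N (\<lambda>x. \<Sum>c\<in>C. indicator (A c) x)"
    using assms(4)
    by (subst Bochner_Integration.integral_sum)
      (auto intro!: integrable_real_indicator simp: less_top[symmetric] Int_absorb2 sets.sets_into_space)
  also have "\<dots> = integral\<^sup>L N (\<lambda>x. \<Sum>d\<in>D. indicator (B d) x)"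
    by (intro Bochner_Integration.integral_cong refl assms(6))
  also have "\<dots> = (\<Sum>d\<in>D. measure N (B d))"
    using assms(5)
    by (subst Bochner_Integration.integral_sum)
      (auto intro!: integrable_real_indicator simp: less_top[symmetric] Int_absorb2 sets.sets_into_space)
  finally show ?thesis .
qed

lemma block_PiE:
  assumes "X \<in> PiE {..<K} (\<lambda>_. S)" and "N + q \<le> K"
  shows "block N q X \<in> PiE {..<q} (\<lambda>_. S)"
  unfolding block_def restrict_PiE_iff
proof
  fix i assume "i \<in> {..<q}"
  then have "N + i \<in> {..<K}"
    using assms(2) by simp
  then show "X (N + i) \<in> S"
    using PiE_mem[OF assms(1)] by simp
qed

locale definably_measurable = prob_space M for M :: "'b measure" +
  fixes E :: "'b \<Rightarrow> 'b \<Rightarrow> bool"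
  assumes sets_defset_FO: "\<phi> \<in> FO p \<Longrightarrow> defset (space M) E undefined p \<phi> \<in> sets (PiM {..<p} (\<lambda>_. M))"
begin

abbreviation PM :: "nat \<Rightarrow> (nat \<Rightarrow> 'b) measure" where
  "PM p \<equiv> PiM {..<p} (\<lambda>_. M)"

lemma prob_space_PM: "prob_space (PM p)"
  by (simp add: prob_space_PiM prob_space_axioms)

text \<open>The root is turned into the extra variable \<open>p\<close>, which a measurable map fixes to \<open>y\<close>.\<close>
lemma sets_defset:
  assumes y: "y \<in> space M" and fv: "fv \<phi> \<subseteq> {..<p}"
  shows "defset (space M) E y p \<phi> \<in> sets (PM p)"
proof -
  define \<sigma> where "\<sigma> i = (if i < p then i else Suc i)" for i
  have inj: "inj \<sigma>" and root: "tm_vars (Var p) \<inter> range \<sigma> = {}"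
    by (auto simp: inj_def \<sigma>_def split: if_splits)
  define \<phi>' where "\<phi>' = rename \<sigma> (Var p) \<phi>"
  have "fv \<phi>' \<subseteq> {..<Suc p}"
    using fv_rename[OF inj, of "Var p" \<phi>] fv by (auto simp: \<phi>'_def \<sigma>_def)
  then have "\<phi>' \<in> FO (Suc p)"
    by (simp add: FO_def \<phi>'_def uses_root_rename_Var)
  define g where "g x = (\<lambda>i\<in>{..<Suc p}. if i < p then x i else y)" for x
  have g: "g \<in> PM p \<rightarrow>\<^sub>M PM (Suc p)"
    unfolding g_def
  proof (rule measurable_restrict)
    fix i
    show "(\<lambda>x. if i < p then x i else y) \<in> PM p \<rightarrow>\<^sub>M M"
      by (cases "i < p") (auto intro: measurable_component_singleton simp: y)
  qed
  have sat_g: "sat (space M) E undefined (g x) \<phi>' = sat (space M) E y x \<phi>" for x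
  proof -
    have "sat (space M) E undefined (g x) \<phi>' = sat (space M) E (g x p) (g x \<circ> \<sigma>) \<phi>"
      unfolding \<phi>'_def by (simp add: sat_rename[OF inj root])
    also have "g x p = y"
      by (simp add: g_def)
    also have "sat (space M) E y (g x \<circ> \<sigma>) \<phi> = sat (space M) E y x \<phi>"
    proof (rule sat_fv_cong)
      fix i assume "i \<in> fv \<phi>"
      then have "i < p" using fv by auto
      then show "(g x \<circ> \<sigma>) i = x i" by (simp add: g_def \<sigma>_def)
    qed
    finally show ?thesis .
  qed
  have "g x \<in> PiE {..<Suc p} (\<lambda>_. space M)" if "x \<in> PiE {..<p} (\<lambda>_. space M)" for x
    unfolding g_def restrict_PiE_iff using that y by (auto dest: PiE_mem)
  then have "defset (space M) E y p \<phi> = g -` defset (space M) E undefined (Suc p) \<phi>' \<inter> space (PM p)"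
    using sat_g by (auto simp: defset_def space_PiM)
  also have "\<dots> \<in> sets (PM p)"
    by (rule measurable_sets[OF g sets_defset_FO[OF \<open>\<phi>' \<in> FO (Suc p)\<close>]])
  finally show ?thesis .
qed

lemma measurable_block: "block N q \<in> PM (N + q) \<rightarrow>\<^sub>M PM q"
  unfolding block_def
  by (rule measurable_restrict) (auto intro: measurable_component_singleton)

lemma emeasure_block_preimage:
  assumes "B \<in> sets (PM q)"
  shows "block N q -` B \<inter> space (PiM {N..<N + q} (\<lambda>_. M)) \<in> sets (PiM {N..<N + q} (\<lambda>_. M))"
    and "emeasure (PiM {N..<N + q} (\<lambda>_. M)) (block N q -` B \<inter> space (PiM {N..<N + q} (\<lambda>_. M)))
      = emeasure (PM q) B"
proof -
  have block: "block N q \<in> PiM {N..<N + q} (\<lambda>_. M) \<rightarrow>\<^sub>M PM q"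
    unfolding block_def by (rule measurable_restrict) (auto intro: measurable_component_singleton)
  then show "block N q -` B \<inter> space (PiM {N..<N + q} (\<lambda>_. M)) \<in> sets (PiM {N..<N + q} (\<lambda>_. M))"
    using assms by (rule measurable_sets)
  have "distr (PiM {N..<N + q} (\<lambda>_. M)) (PM q) (block N q) = PM q"
    unfolding block_def
    using distr_PiM_reindex[of "{N..<N + q}" "\<lambda>_. M" "(+) N" "{..<q}"] prob_space_axioms by auto
  then show "emeasure (PiM {N..<N + q} (\<lambda>_. M)) (block N q -` B \<inter> space (PiM {N..<N + q} (\<lambda>_. M)))
      = emeasure (PM q) B"
    using assms block by (metis emeasure_distr)
qed

lemma measure_prefix_block:
  assumes A: "A \<in> sets (PM N)" and B: "B \<in> sets (PM q)"
  defines "S \<equiv> {X \<in> PiE {..<N + q} (\<lambda>_. space M). restrict X {..<N} \<in> A \<and> block N q X \<in> B}"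
  shows "S \<in> sets (PM (N + q))"
    and "measure (PM (N + q)) S = measure (PM N) A * measure (PM q) B"
proof -
  interpret product_sigma_finite "\<lambda>_. M"
    by (simp add: product_sigma_finite_def sigma_finite_measure_axioms)
  have prefix: "(\<lambda>X. restrict X {..<N}) \<in> PM (N + q) \<rightarrow>\<^sub>M PM N"
    by (rule measurable_restrict_subset) auto
  have "S = ((\<lambda>X. restrict X {..<N}) -` A \<inter> space (PM (N + q)))
      \<inter> (block N q -` B \<inter> space (PM (N + q)))"
    by (auto simp: S_def space_PiM)
  then show S: "S \<in> sets (PM (N + q))"
    using measurable_sets[OF prefix A] measurable_sets[OF measurable_block B] by simp
  define I where "I = {..<N}"
  define J where "J = {N..<N + q}"
  have IJ: "{..<N + q} = I \<union> J" "I \<inter> J = {}" "finite I" "finite J"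
    by (auto simp: I_def J_def)
  interpret PJ: prob_space "PiM J (\<lambda>_. M)"
    by (simp add: prob_space_PiM prob_space_axioms)
  define B' where "B' = block N q -` B \<inter> space (PiM J (\<lambda>_. M))"
  have merge_parts: "restrict (merge I J (x, y)) {..<N} = x" "block N q (merge I J (x, y)) = block N q y"
    if "x \<in> PiE I (\<lambda>_. space M)" "y \<in> PiE J (\<lambda>_. space M)" for x y
    using that by (auto simp: merge_def I_def J_def fun_eq_iff block_def PiE_def extensional_def)
  have preimage: "merge I J -` S \<inter> space (PiM I (\<lambda>_. M) \<Otimes>\<^sub>M PiM J (\<lambda>_. M)) = A \<times> B'"
  proof (intro set_eqI iffI)
    fix z assume z: "z \<in> merge I J -` S \<inter> space (PiM I (\<lambda>_. M) \<Otimes>\<^sub>M PiM J (\<lambda>_. M))"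
    obtain x y where "z = (x, y)" "x \<in> PiE I (\<lambda>_. space M)" "y \<in> PiE J (\<lambda>_. space M)"
      using z by (auto simp: space_pair_measure space_PiM)
    then show "z \<in> A \<times> B'"
      using z merge_parts by (auto simp: S_def B'_def space_PiM)
  next
    fix z assume z: "z \<in> A \<times> B'"
    obtain x y where xy: "z = (x, y)" "x \<in> PiE I (\<lambda>_. space M)" "y \<in> PiE J (\<lambda>_. space M)"
      using z sets.sets_into_space[OF A] by (auto simp: B'_def space_PiM I_def)
    then have "merge I J (x, y) \<in> PiE {..<N + q} (\<lambda>_. space M)"
      using IJ(1) by (auto simp: merge_def PiE_def extensional_def Pi_def)
    then show "z \<in> merge I J -` S \<inter> space (PiM I (\<lambda>_. M) \<Otimes>\<^sub>M PiM J (\<lambda>_. M))"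
      using z xy merge_parts by (auto simp: S_def B'_def space_pair_measure space_PiM)
  qed
  have "emeasure (PM (N + q)) S
      = emeasure (distr (PiM I (\<lambda>_. M) \<Otimes>\<^sub>M PiM J (\<lambda>_. M)) (PiM (I \<union> J) (\<lambda>_. M)) (merge I J)) S"
    using distr_merge[OF IJ(2-4)] IJ(1) by simp
  also have "\<dots> = emeasure (PiM I (\<lambda>_. M) \<Otimes>\<^sub>M PiM J (\<lambda>_. M)) (A \<times> B')"
    using S IJ(1) by (subst emeasure_distr) (auto simp: preimage measurable_merge)
  also have "\<dots> = emeasure (PiM I (\<lambda>_. M)) A * emeasure (PiM J (\<lambda>_. M)) B'"
    using A emeasure_block_preimage(1)[OF B, of N]
    by (intro PJ.emeasure_pair_measure_Times) (auto simp: I_def J_def B'_def)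
  also have "emeasure (PiM J (\<lambda>_. M)) B' = emeasure (PM q) B"
    unfolding B'_def J_def by (rule emeasure_block_preimage(2)[OF B])
  finally show "measure (PM (N + q)) S = measure (PM N) A * measure (PM q) B"
    by (simp add: I_def measure_def enn2real_mult)
qed

lemma stone_mod_pad:
  assumes y: "y \<in> space M" and fv: "fv \<phi> \<subseteq> {..<p}" and "p \<le> P"
  shows "stone_mod M E y P \<phi> = stone_mod M E y p \<phi>"
proof -
  define q where "q = P - p"
  have P: "P = p + q"
    using \<open>p \<le> P\<close> by (simp add: q_def)
  have eq: "defset (space M) E y P \<phi> = {X \<in> PiE {..<p + q} (\<lambda>_. space M).
      restrict X {..<p} \<in> defset (space M) E y p \<phi> \<and> block p q X \<in> space (PM q)}"
  proof -
    have "sat (space M) E y (restrict X {..<p}) \<phi> = sat (space M) E y X \<phi>" for X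
      using fv by (intro sat_fv_cong) auto
    moreover have "restrict X {..<p} \<in> PiE {..<p} (\<lambda>_. space M)" "block p q X \<in> space (PM q)"
      if "X \<in> PiE {..<p + q} (\<lambda>_. space M)" for X
      using that block_PiE[OF that, of p q] by (auto simp: space_PiM restrict_PiE_iff dest: PiE_mem)
    ultimately show ?thesis
      by (auto simp: defset_def P)
  qed
  have "stone_mod M E y P \<phi> = stone_mod M E y p \<phi> * measure (PM q) (space (PM q))"
    unfolding stone_mod_eq_measure eq unfolding P
    by (rule measure_prefix_block(2)[OF sets_defset[OF y fv] sets.top])
  then show ?thesis
    using prob_space.prob_space[OF prob_space_PM] by simp
qed

definition block_set :: "nat \<Rightarrow> nat \<Rightarrow> (nat \<Rightarrow> (nat \<Rightarrow> 'b) set) \<Rightarrow> (nat \<Rightarrow> 'b) set" where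
  "block_set s P A = {X \<in> PiE {..<s * P} (\<lambda>_. space M). \<forall>j<s. block (j * P) P X \<in> A j}"

lemma
  assumes "\<And>j. j < s \<Longrightarrow> A j \<in> sets (PM P)"
  shows sets_block_set: "block_set s P A \<in> sets (PM (s * P))"
    and measure_block_set: "measure (PM (s * P)) (block_set s P A) = (\<Prod>j<s. measure (PM P) (A j))"
proof -
  have "block_set s P A \<in> sets (PM (s * P)) \<and>
      measure (PM (s * P)) (block_set s P A) = (\<Prod>j<s. measure (PM P) (A j))"
    using assms
  proof (induction s)
    case 0
    have "block_set 0 P A = space (PM 0)"
      by (simp add: block_set_def space_PiM)
    then show ?case
      using prob_space.prob_space[OF prob_space_PM, of 0] by simp
  next
    case (Suc s)
    have SP: "Suc s * P = s * P + P"
      by simp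
    have block_prefix: "block (j * P) P (restrict X {..<s * P}) = block (j * P) P X" if "j < s" for j X
    proof -
      have "j * P + P \<le> s * P"
        using that mult_le_mono1[of "Suc j" s P] by simp
      then show ?thesis
        by (auto simp: block_def fun_eq_iff)
    qed
    have "(\<forall>j<Suc s. block (j * P) P X \<in> A j) \<longleftrightarrow>
        (\<forall>j<s. block (j * P) P (restrict X {..<s * P}) \<in> A j) \<and> block (s * P) P X \<in> A s" for X
      by (auto simp: less_Suc_eq block_prefix)
    moreover have "restrict X {..<s * P} \<in> PiE {..<s * P} (\<lambda>_. space M)"
      if "X \<in> PiE {..<s * P + P} (\<lambda>_. space M)" for X
      unfolding restrict_PiE_iff using PiE_mem[OF that] by simp
    ultimately have eq: "block_set (Suc s) P A = {X \<in> PiE {..<s * P + P} (\<lambda>_. space M).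
        restrict X {..<s * P} \<in> block_set s P A \<and> block (s * P) P X \<in> A s}"
      unfolding block_set_def SP by blast
    have IH: "block_set s P A \<in> sets (PM (s * P))"
      "measure (PM (s * P)) (block_set s P A) = (\<Prod>j<s. measure (PM P) (A j))"
      using Suc by auto
    show ?case
      unfolding SP eq prod.lessThan_Suc IH(2)[symmetric]
      using measure_prefix_block[OF IH(1) Suc.prems[of s]] by simp
  qed
  then show "block_set s P A \<in> sets (PM (s * P))"
    and "measure (PM (s * P)) (block_set s P A) = (\<Prod>j<s. measure (PM P) (A j))"
    by auto
qed

definition root_witnesses :: "fo \<Rightarrow> nat \<Rightarrow> fo list \<Rightarrow> (nat \<Rightarrow> 'b) \<Rightarrow> 'b set" where
  "root_witnesses \<xi> P \<psi>s X = {y \<in> definable_vertices (space M) E \<xi>.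
     X \<in> block_set (length \<psi>s) P (\<lambda>j. defset (space M) E y P (\<psi>s ! j))}"

lemma mem_defset_moment_formula_iff:
  assumes \<xi>: "\<xi> \<in> FO 1" and \<psi>s: "\<And>\<psi>. \<psi> \<in> set \<psi>s \<Longrightarrow> fv \<psi> \<subseteq> {..<P}"
    and fin: "finite (definable_vertices (space M) E \<xi>)"
    and X: "X \<in> PiE {..<length \<psi>s * P} (\<lambda>_. space M)"
  shows "X \<in> defset (space M) E undefined (length \<psi>s * P) (moment_formula \<xi> P \<psi>s c)
    \<longleftrightarrow> c \<le> card (root_witnesses \<xi> P \<psi>s X)"
proof -
  define N where "N = length \<psi>s * P"
  have "block (j * P) P X \<in> PiE {..<P} (\<lambda>_. space M)" if "j < length \<psi>s" for j
  proof (rule block_PiE[OF X])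
    show "j * P + P \<le> length \<psi>s * P"
      using that mult_le_mono1[of "Suc j" "length \<psi>s" P] by simp
  qed
  then have "sat (space M) E undefined (X(N := v)) (joint_formula \<xi> P \<psi>s)
      \<longleftrightarrow> v \<in> root_witnesses \<xi> P \<psi>s X" if "v \<in> space M" for v
    using that X sat_joint_formula[OF \<xi> \<psi>s, where V="space M" and E=E and r=undefined and X=X and y=v]
    by (simp add: root_witnesses_def definable_vertices_def block_set_def defset_def N_def)
  moreover have "root_witnesses \<xi> P \<psi>s X \<subseteq> space M"
    by (auto simp: root_witnesses_def definable_vertices_def)
  ultimately have "{v \<in> space M. sat (space M) E undefined (X(N := v)) (joint_formula \<xi> P \<psi>s)}
      = root_witnesses \<xi> P \<psi>s X"
    by blast
  moreover have "finite (root_witnesses \<xi> P \<psi>s X)"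
    using fin by (simp add: root_witnesses_def)
  ultimately show ?thesis
    using X sat_at_least[of "space M" E undefined X N "joint_formula \<xi> P \<psi>s" c]
    by (simp add: defset_def moment_formula_def N_def)
qed

lemma sum_stone_mod_moment_formula:
  assumes \<xi>: "\<xi> \<in> FO 1" and \<psi>s: "\<And>\<psi>. \<psi> \<in> set \<psi>s \<Longrightarrow> fv \<psi> \<subseteq> {..<P}"
    and fin: "finite (definable_vertices (space M) E \<xi>)"
    and K: "card (definable_vertices (space M) E \<xi>) \<le> K"
  shows "(\<Sum>c\<in>{1..K}. stone_mod M E undefined (length \<psi>s * P) (moment_formula \<xi> P \<psi>s c))
       = (\<Sum>y\<in>definable_vertices (space M) E \<xi>. \<Prod>\<psi>\<leftarrow>\<psi>s. stone_mod M E y P \<psi>)"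
proof -
  define s where "s = length \<psi>s"
  define N where "N = s * P"
  define Y where "Y = definable_vertices (space M) E \<xi>"
  define D where "D = (\<lambda>y j. defset (space M) E y P (\<psi>s ! j))"
  have D: "D y j \<in> sets (PM P)" if "y \<in> Y" "j < s" for y j
    unfolding D_def
    by (rule sets_defset)
      (use that \<psi>s[OF nth_mem] in \<open>auto simp: Y_def definable_vertices_def s_def\<close>)
  have "(\<Sum>c\<in>{1..K}. stone_mod M E undefined N (moment_formula \<xi> P \<psi>s c))
      = (\<Sum>y\<in>Y. measure (PM N) (block_set s P (D y)))"
    unfolding stone_mod_eq_measure
  proof (rule sum_measure_eq_if_sum_indicator_eq)
    show "finite_measure (PM N)"
      using prob_space_PM by (simp add: prob_space_def)
    show "finite {1..K}" "finite Y"
      using fin by (simp_all add: Y_def)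
    show "defset (space M) E undefined N (moment_formula \<xi> P \<psi>s c) \<in> sets (PM N)" for c
      unfolding N_def s_def by (intro sets_defset_FO moment_formula_FO[OF \<xi> \<psi>s])
    show "block_set s P (D y) \<in> sets (PM N)" if "y \<in> Y" for y
      unfolding N_def using D[OF that] by (rule sets_block_set)
    fix X assume "X \<in> space (PM N)"
    then have X: "X \<in> PiE {..<N} (\<lambda>_. space M)"
      by (simp add: space_PiM)
    let ?W = "root_witnesses \<xi> P \<psi>s X"
    have "card ?W \<le> K"
      using K card_mono[OF fin, of ?W] by (auto simp: root_witnesses_def)
    then have "{1..K} \<inter> {c. c \<le> card ?W} = {1..card ?W}"
      by auto
    then have "(\<Sum>c\<in>{1..K}. indicator (defset (space M) E undefined N (moment_formula \<xi> P \<psi>s c)) X)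
        = real (card ?W)"
      using mem_defset_moment_formula_iff[where \<psi>s=\<psi>s and P=P, OF \<xi> \<psi>s fin] X
      by (simp add: indicator_def N_def s_def)
    also have "\<dots> = (\<Sum>y\<in>Y. indicator (block_set s P (D y)) X)"
      using fin by (simp add: indicator_def root_witnesses_def Y_def D_def s_def Int_def conj_commute)
    finally show "(\<Sum>c\<in>{1..K}. indicator (defset (space M) E undefined N (moment_formula \<xi> P \<psi>s c)) X)
        = (\<Sum>y\<in>Y. indicator (block_set s P (D y)) X :: real)" .
  qed
  also have "\<dots> = (\<Sum>y\<in>Y. \<Prod>j<s. measure (PM P) (D y j))"
    unfolding N_def using D by (intro sum.cong refl measure_block_set) auto
  also have "\<dots> = (\<Sum>y\<in>Y. \<Prod>\<psi>\<leftarrow>\<psi>s. stone_mod M E y P \<psi>)"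
    by (simp add: prod.list_conv_set_nth atLeast0LessThan D_def s_def stone_mod_eq_measure)
  finally show ?thesis
    by (simp add: N_def s_def Y_def)
qed

end

section \<open>Finite graphs and convergence of moments\<close>

lemma sets_PiM_uniform_count_measure:
  fixes p :: nat
  assumes V: "finite V" and S: "S \<subseteq> PiE {..<p} (\<lambda>_. V)"
  shows "S \<in> sets (PiM {..<p} (\<lambda>_. uniform_count_measure V))"
proof -
  have "finite (PiE {..<p} (\<lambda>_. V))"
    using V by (intro finite_PiE) simp_all
  then have "finite S"
    using S by (rule finite_subset[rotated])
  moreover have "{x} \<in> sets (PiM {..<p} (\<lambda>_. uniform_count_measure V))" if "x \<in> S" for x
  proof -
    have x: "x \<in> PiE {..<p} (\<lambda>_. V)"
      using that S by auto
    then have "{x} = PiE {..<p} (\<lambda>i. {x i})"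
      using PiE_singleton[of x "{..<p}"] by (simp add: PiE_iff)
    also have "\<dots> \<in> sets (PiM {..<p} (\<lambda>_. uniform_count_measure V))"
      by (rule sets_PiM_I_finite) (use x in \<open>auto simp: sets_uniform_count_measure dest: PiE_mem\<close>)
    finally show ?thesis .
  qed
  ultimately have "(\<Union>x\<in>S. {x}) \<in> sets (PiM {..<p} (\<lambda>_. uniform_count_measure V))"
    by (intro sets.finite_UN)
  then show ?thesis
    by simp
qed

lemma measure_PiM_uniform_count_measure:
  assumes V: "finite V" "V \<noteq> {}" and S: "S \<subseteq> PiE {..<p} (\<lambda>_. V)"
  shows "measure (PiM {..<p} (\<lambda>_. uniform_count_measure V)) S = real (card S) / real (card V) ^ p"
proof -
  let ?U = "uniform_count_measure V"
  let ?P = "PiM {..<p} (\<lambda>_. ?U)"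
  interpret U: prob_space ?U
    by (rule prob_space_uniform_count_measure[OF V])
  interpret F: finite_product_sigma_finite "\<lambda>_. ?U" "{..<p}"
    by standard (auto simp: prob_space_imp_sigma_finite U.prob_space_axioms)
  have "finite (PiE {..<p} (\<lambda>_. V))"
    using V by (intro finite_PiE) simp_all
  then have "finite S"
    using S by (rule finite_subset[rotated])
  have point: "emeasure ?P {x} = ennreal ((1 / real (card V)) ^ p)" if "x \<in> S" for x
  proof -
    have x: "x \<in> PiE {..<p} (\<lambda>_. V)"
      using that S by auto
    then have "{x} = PiE {..<p} (\<lambda>i. {x i})"
      using PiE_singleton[of x "{..<p}"] by (simp add: PiE_iff)
    moreover have "{x i} \<in> sets ?U" if "i \<in> {..<p}" for i
      using PiE_mem[OF x that] by (simp add: sets_uniform_count_measure)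
    ultimately have "emeasure ?P {x} = (\<Prod>i<p. emeasure ?U {x i})"
      using F.measure_times[of "\<lambda>i. {x i}"] by simp
    also have "\<dots> = (\<Prod>i<p. ennreal (1 / real (card V)))"
      using PiE_mem[OF x] V
      by (intro prod.cong) (auto simp: U.emeasure_eq_measure measure_uniform_count_measure)
    finally show ?thesis
      by (simp add: prod_ennreal ennreal_power)
  qed
  have "{x} \<in> sets ?P" if "x \<in> S" for x
    using that S by (intro sets_PiM_uniform_count_measure[OF V(1)]) auto
  then have "measure ?P S = (\<Sum>x\<in>S. measure ?P {x})"
    by (rule measure_eq_sum_singleton[OF \<open>finite S\<close>]) (use point in auto)
  also have "\<dots> = (\<Sum>x\<in>S. (1 / real (card V)) ^ p)"
    using point by (intro sum.cong) (auto simp: measure_def)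
  finally show ?thesis
    by (simp add: power_one_over divide_inverse power_inverse)
qed

lemma stone_fin_eq_stone_mod:
  assumes "finite V" "V \<noteq> {}"
  shows "stone_fin V E r p \<phi> = stone_mod (uniform_count_measure V) E r p \<phi>"
proof (cases "p = 0")
  case False
  have "defset V E r p \<phi> \<subseteq> PiE {..<p} (\<lambda>_. V)"
    by (auto simp: defset_def)
  then show ?thesis
    using False measure_PiM_uniform_count_measure[OF assms]
    by (simp add: stone_fin_def stone_mod_def space_uniform_count_measure)
qed (simp add: stone_fin_def stone_mod_def space_uniform_count_measure)

lemma definably_measurable_uniform_count_measure:
  assumes "finite V" "V \<noteq> {}"
  shows "definably_measurable (uniform_count_measure V) E"
proof -
  interpret prob_space "uniform_count_measure V"
    by (rule prob_space_uniform_count_measure[OF assms])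
  show ?thesis
    by unfold_locales
      (auto intro!: sets_PiM_uniform_count_measure[OF assms(1)]
        simp: defset_def space_uniform_count_measure)
qed

lemma definably_measurable_modeling: "modeling M E \<Longrightarrow> definably_measurable M E"
  by (simp add: modeling_def definably_measurable_def definably_measurable_axioms_def)

lemma sat_not_at_least:
  assumes "\<xi> \<in> FO 1" and "finite (definable_vertices V E \<xi>)"
  shows "sat V E r a (FNot (at_least 0 (Suc k) \<xi>)) \<longleftrightarrow> card (definable_vertices V E \<xi>) \<le> k"
proof -
  have "sat V E r (a(0 := v)) \<xi> \<longleftrightarrow> sat V E undefined (\<lambda>_. v) \<xi>" for v
    using sat_FO_1[OF assms(1), of V E r "a(0 := v)"] by simp
  then have "{v \<in> V. sat V E r (a(0 := v)) \<xi>} = definable_vertices V E \<xi>"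
    by (simp add: definable_vertices_def)
  then show ?thesis
    using sat_at_least[of V E r a 0 \<xi> "Suc k"] assms(2)
    by (simp del: at_least.simps add: not_le less_Suc_eq_le)
qed

lemma not_at_least_FO: "\<xi> \<in> FO 1 \<Longrightarrow> FNot (at_least 0 c \<xi>) \<in> FO 0"
  using fv_at_least[of 0 c \<xi>] uses_root_at_least[of \<xi> 0 c] by (auto simp: FO_def)

lemma eventually_card_definable_vertices_le:
  assumes lim: "modeling_limit M EL V E" and fin: "\<And>n. finite (V n)"
    and \<xi>: "\<xi> \<in> FO 1" and finL: "finite (definable_vertices (space M) EL \<xi>)"
  shows "eventually (\<lambda>n. card (definable_vertices (V n) (E n) \<xi>)
    \<le> card (definable_vertices (space M) EL \<xi>)) sequentially"
proof -
  define k where "k = card (definable_vertices (space M) EL \<xi>)"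
  define \<sigma> where "\<sigma> = FNot (at_least 0 (Suc k) \<xi>)"
  have "(\<lambda>n. stone_fin (V n) (E n) undefined 0 \<sigma>) \<longlonglongrightarrow> stone_mod M EL undefined 0 \<sigma>"
    using lim not_at_least_FO[OF \<xi>] by (simp add: modeling_limit_def \<sigma>_def del: at_least.simps)
  moreover have "stone_mod M EL undefined 0 \<sigma> = 1"
    using sat_not_at_least[OF \<xi> finL] by (simp add: stone_mod_def \<sigma>_def k_def del: at_least.simps)
  ultimately have "(\<lambda>n. stone_fin (V n) (E n) undefined 0 \<sigma>) \<longlonglongrightarrow> 1"
    by simp
  then have "eventually (\<lambda>n. stone_fin (V n) (E n) undefined 0 \<sigma> > 1 / 2) sequentially"
    by (rule order_tendstoD) simp
  moreover have "stone_fin (V n) (E n) undefined 0 \<sigma>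
      = of_bool (card (definable_vertices (V n) (E n) \<xi>) \<le> k)" for n
  proof -
    have "finite (definable_vertices (V n) (E n) \<xi>)"
      using fin[of n] by (simp add: definable_vertices_def)
    then show ?thesis
      using sat_not_at_least[OF \<xi>, of "V n" "E n" undefined "\<lambda>_. undefined" k]
      by (simp add: stone_fin_def \<sigma>_def del: at_least.simps)
  qed
  ultimately show ?thesis
    by (auto elim!: eventually_mono simp: k_def of_bool_def split: if_splits)
qed

lemma tendsto_sum_definable_moments:
  assumes lim: "modeling_limit M EL V E" and fin: "\<And>n. finite_graph (V n) (E n)"
    and \<xi>: "\<xi> \<in> FO 1" and finL: "finite (definable_vertices (space M) EL \<xi>)"
    and \<psi>s: "\<And>\<psi>. \<psi> \<in> set \<psi>s \<Longrightarrow> fv \<psi> \<subseteq> {..<P}"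
  shows "(\<lambda>n. \<Sum>y\<in>definable_vertices (V n) (E n) \<xi>. \<Prod>\<psi>\<leftarrow>\<psi>s. stone_fin (V n) (E n) y P \<psi>)
    \<longlonglongrightarrow> (\<Sum>y\<in>definable_vertices (space M) EL \<xi>. \<Prod>\<psi>\<leftarrow>\<psi>s. stone_mod M EL y P \<psi>)"
proof -
  define k where "k = card (definable_vertices (space M) EL \<xi>)"
  define N where "N = length \<psi>s * P"
  have V: "finite (V n)" "V n \<noteq> {}" for n
    using fin by (auto simp: finite_graph_def)
  interpret L: definably_measurable M EL
    using lim by (simp add: modeling_limit_def definably_measurable_modeling)
  have "(\<lambda>n. \<Sum>c\<in>{1..k}. stone_fin (V n) (E n) undefined N (moment_formula \<xi> P \<psi>s c))
      \<longlonglongrightarrow> (\<Sum>c\<in>{1..k}. stone_mod M EL undefined N (moment_formula \<xi> P \<psi>s c))"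
    using lim moment_formula_FO[OF \<xi> \<psi>s] by (intro tendsto_sum) (simp add: modeling_limit_def N_def)
  also have "(\<Sum>c\<in>{1..k}. stone_mod M EL undefined N (moment_formula \<xi> P \<psi>s c))
      = (\<Sum>y\<in>definable_vertices (space M) EL \<xi>. \<Prod>\<psi>\<leftarrow>\<psi>s. stone_mod M EL y P \<psi>)"
    unfolding N_def k_def by (rule L.sum_stone_mod_moment_formula[OF \<xi> \<psi>s finL order.refl])
  finally show ?thesis
  proof (rule Lim_transform_eventually)
    show "eventually (\<lambda>n. (\<Sum>c\<in>{1..k}. stone_fin (V n) (E n) undefined N (moment_formula \<xi> P \<psi>s c))
        = (\<Sum>y\<in>definable_vertices (V n) (E n) \<xi>. \<Prod>\<psi>\<leftarrow>\<psi>s. stone_fin (V n) (E n) y P \<psi>)) sequentially"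
      using eventually_card_definable_vertices_le[OF lim V(1) \<xi> finL]
    proof (rule eventually_mono)
      fix n
      assume card: "card (definable_vertices (V n) (E n) \<xi>) \<le> card (definable_vertices (space M) EL \<xi>)"
      interpret G: definably_measurable "uniform_count_measure (V n)" "E n"
        using V by (rule definably_measurable_uniform_count_measure)
      show "(\<Sum>c\<in>{1..k}. stone_fin (V n) (E n) undefined N (moment_formula \<xi> P \<psi>s c))
          = (\<Sum>y\<in>definable_vertices (V n) (E n) \<xi>. \<Prod>\<psi>\<leftarrow>\<psi>s. stone_fin (V n) (E n) y P \<psi>)"
        using G.sum_stone_mod_moment_formula[where \<psi>s=\<psi>s and P=P and K=k, OF \<xi> \<psi>s] card V[of n]
        by (simp add: stone_fin_eq_stone_mod[OF V] space_uniform_count_measure k_def N_def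
            definable_vertices_def[of "V n"])
    qed
  qed
qed

lemma stone_fin_pad:
  assumes "finite V" "V \<noteq> {}" "y \<in> V" "fv \<phi> \<subseteq> {..<p}" "p \<le> P"
  shows "stone_fin V E y P \<phi> = stone_fin V E y p \<phi>"
proof -
  interpret definably_measurable "uniform_count_measure V" E
    using assms(1,2) by (rule definably_measurable_uniform_count_measure)
  show ?thesis
    using stone_mod_pad[of y \<phi> p P] assms
    by (simp add: stone_fin_eq_stone_mod space_uniform_count_measure)
qed

section \<open>Points recovered from moments\<close>

inductive poly_fun :: "((nat \<Rightarrow> real) \<Rightarrow> real) \<Rightarrow> bool" where
  monomial: "poly_fun (\<lambda>z. c * (\<Prod>i\<leftarrow>\<alpha>. z i))"
| add: "poly_fun f \<Longrightarrow> poly_fun g \<Longrightarrow> poly_fun (\<lambda>z. f z + g z)"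

lemma poly_fun_const: "poly_fun (\<lambda>z. c)"
  using poly_fun.monomial[of c "[]"] by simp

lemma poly_fun_mult:
  assumes "poly_fun f" and "poly_fun g"
  shows "poly_fun (\<lambda>z. f z * g z)"
  using assms
proof (induction f rule: poly_fun.induct)
  case (monomial c \<alpha>)
  then show ?case
  proof (induction g rule: poly_fun.induct)
    case (monomial d \<beta>)
    have "(\<lambda>z. c * (\<Prod>i\<leftarrow>\<alpha>. z i) * (d * (\<Prod>i\<leftarrow>\<beta>. z i))) = (\<lambda>z. (c * d) * (\<Prod>i\<leftarrow>\<alpha> @ \<beta>. z i))"
      by (simp add: fun_eq_iff)
    then show ?case
      by (metis poly_fun.monomial)
  next
    case (add g h)
    then show ?case
      by (simp add: distrib_left poly_fun.add)
  qed
next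
  case (add f f')
  then show ?case
    by (simp add: distrib_right poly_fun.add)
qed

lemma poly_fun_diff:
  assumes "poly_fun f" and "poly_fun g"
  shows "poly_fun (\<lambda>z. f z - g z)"
proof -
  have "poly_fun (\<lambda>z. f z + - 1 * g z)"
    using assms by (intro poly_fun.add poly_fun_mult poly_fun_const)
  then show ?thesis
    by simp
qed

lemma poly_fun_sum: "finite A \<Longrightarrow> (\<And>a. a \<in> A \<Longrightarrow> poly_fun (f a)) \<Longrightarrow> poly_fun (\<lambda>z. \<Sum>a\<in>A. f a z)"
  by (induction A rule: finite_induct) (simp_all add: poly_fun_const poly_fun.add)

lemma poly_fun_prod: "finite A \<Longrightarrow> (\<And>a. a \<in> A \<Longrightarrow> poly_fun (f a)) \<Longrightarrow> poly_fun (\<lambda>z. \<Prod>a\<in>A. f a z)"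
  by (induction A rule: finite_induct) (simp_all add: poly_fun_const poly_fun_mult)

definition sq_dist :: "nat \<Rightarrow> (nat \<Rightarrow> real) \<Rightarrow> (nat \<Rightarrow> real) \<Rightarrow> real" where
  "sq_dist m z t = (\<Sum>a<m. (z a - t a)\<^sup>2)"

lemma poly_fun_sq_dist: "poly_fun (\<lambda>z. sq_dist m z t)"
proof -
  have expand: "(\<lambda>z. (z a - t a)\<^sup>2)
      = (\<lambda>z. 1 * (\<Prod>i\<leftarrow>[a, a]. z i) + ((- 2 * t a) * (\<Prod>i\<leftarrow>[a]. z i) + (t a)\<^sup>2 * (\<Prod>i\<leftarrow>[]. z i)))" for a
    by (simp add: fun_eq_iff power2_eq_square algebra_simps)
  have "poly_fun (\<lambda>z. (z a - t a)\<^sup>2)" for a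
    unfolding expand by (intro poly_fun.add poly_fun.monomial)
  then show ?thesis
    unfolding sq_dist_def by (intro poly_fun_sum) auto
qed

lemma sq_dist_nonneg: "sq_dist m z t \<ge> 0"
  by (simp add: sq_dist_def sum_nonneg)

lemma sq_dist_commute: "sq_dist m z t = sq_dist m t z"
  by (simp add: sq_dist_def power2_commute)

lemma sq_dist_self: "sq_dist m z z = 0"
  by (simp add: sq_dist_def)

lemma abs_diff_less_if_sq_dist_less:
  assumes "sq_dist m z t < \<epsilon>\<^sup>2" and "\<epsilon> > 0" and "a < m"
  shows "\<bar>z a - t a\<bar> < \<epsilon>"
proof -
  have "(z a - t a)\<^sup>2 \<le> sq_dist m z t"
    unfolding sq_dist_def using \<open>a < m\<close> by (intro member_le_sum) auto
  then have "\<bar>z a - t a\<bar>\<^sup>2 < \<epsilon>\<^sup>2"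
    using assms(1) by simp
  then show ?thesis
    by (rule power2_less_imp_less) (use \<open>\<epsilon> > 0\<close> in simp)
qed

lemma tendsto_sum_poly_fun:
  assumes moments: "\<And>\<alpha>. (\<lambda>n. \<Sum>y\<in>A n. \<Prod>i\<leftarrow>\<alpha>. w n y i) \<longlonglongrightarrow> (\<Sum>y\<in>Y. \<Prod>i\<leftarrow>\<alpha>. u y i)"
    and "poly_fun f"
  shows "(\<lambda>n. \<Sum>y\<in>A n. f (w n y)) \<longlonglongrightarrow> (\<Sum>y\<in>Y. f (u y))"
  using \<open>poly_fun f\<close>
proof (induction rule: poly_fun.induct)
  case (monomial c \<alpha>)
  then show ?case
    using tendsto_mult_left[OF moments[of \<alpha>], of c] by (simp add: sum_distrib_left)
next
  case (add f g)
  then show ?case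
    by (simp add: sum.distrib tendsto_add)
qed

text \<open>The witness is the product of the squared distances to the points \<open>u y \<noteq> u y\<^sub>0\<close>.\<close>
lemma exists_poly_fun_isolating:
  assumes "finite Y" and "y\<^sub>0 \<in> Y"
  obtains F where "poly_fun F" and "\<And>z. F z \<ge> 0"
    and "(\<Sum>y\<in>Y. sq_dist m (u y) (u y\<^sub>0) * F (u y)) = 0" and "(\<Sum>y\<in>Y. F (u y)) > 0"
proof
  define Z where "Z = {y \<in> Y. sq_dist m (u y) (u y\<^sub>0) \<noteq> 0}"
  have "finite Z"
    using assms(1) by (simp add: Z_def)
  show "poly_fun (\<lambda>z. \<Prod>y\<in>Z. sq_dist m z (u y))"
    using \<open>finite Z\<close> by (intro poly_fun_prod poly_fun_sq_dist)
  show "(\<Prod>y\<in>Z. sq_dist m z (u y)) \<ge> 0" for z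
    by (simp add: prod_nonneg sq_dist_nonneg)
  have "sq_dist m (u y) (u y\<^sub>0) * (\<Prod>y'\<in>Z. sq_dist m (u y) (u y')) = 0" if "y \<in> Y" for y
    using that \<open>finite Z\<close> by (cases "y \<in> Z") (auto simp: Z_def sq_dist_self prod_zero_iff)
  then show "(\<Sum>y\<in>Y. sq_dist m (u y) (u y\<^sub>0) * (\<Prod>y'\<in>Z. sq_dist m (u y) (u y'))) = 0"
    by (rule sum.neutral[OF ballI])
  have "(\<Prod>y\<in>Z. sq_dist m (u y\<^sub>0) (u y)) > 0"
    using sq_dist_nonneg[of m] by (intro prod_pos) (auto simp: Z_def sq_dist_commute less_le)
  also have "\<dots> \<le> (\<Sum>y\<in>Y. \<Prod>y'\<in>Z. sq_dist m (u y) (u y'))"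
    using assms by (intro member_le_sum) (auto intro: prod_nonneg sq_dist_nonneg)
  finally show "(\<Sum>y\<in>Y. \<Prod>y'\<in>Z. sq_dist m (u y) (u y')) > 0" .
qed

lemma exists_less_if_weighted_sum_less:
  fixes d F :: "'a \<Rightarrow> real"
  assumes "\<And>y. y \<in> B \<Longrightarrow> F y \<ge> 0" and "(\<Sum>y\<in>B. d y * F y) < \<delta> * (\<Sum>y\<in>B. F y)"
  shows "\<exists>y\<in>B. d y < \<delta>"
proof (rule ccontr)
  assume "\<not> (\<exists>y\<in>B. d y < \<delta>)"
  then have "(\<Sum>y\<in>B. \<delta> * F y) \<le> (\<Sum>y\<in>B. d y * F y)"
    using assms(1) by (intro sum_mono mult_right_mono) (auto simp: not_less)
  then show False
    using assms(2) by (simp add: sum_distrib_left)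
qed

lemma eventually_near_if_tendsto_moments:
  fixes A :: "nat \<Rightarrow> 'y set" and w :: "nat \<Rightarrow> 'y \<Rightarrow> nat \<Rightarrow> real"
    and Y :: "'z set" and u :: "'z \<Rightarrow> nat \<Rightarrow> real"
  assumes "finite Y" and moments: "\<And>\<alpha>. (\<lambda>n. \<Sum>y\<in>A n. \<Prod>i\<leftarrow>\<alpha>. w n y i) \<longlonglongrightarrow> (\<Sum>y\<in>Y. \<Prod>i\<leftarrow>\<alpha>. u y i)"
    and "y\<^sub>0 \<in> Y" and "\<epsilon> > 0"
  shows "eventually (\<lambda>n. \<exists>y\<in>A n. \<forall>a<m. \<bar>w n y a - u y\<^sub>0 a\<bar> < \<epsilon>) sequentially"
proof -
  obtain F where F: "poly_fun F" "\<And>z. F z \<ge> 0"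
    and vanish: "(\<Sum>y\<in>Y. sq_dist m (u y) (u y\<^sub>0) * F (u y)) = 0" and pos: "(\<Sum>y\<in>Y. F (u y)) > 0"
    using exists_poly_fun_isolating[OF assms(1,3)] by blast
  have "poly_fun (\<lambda>z. (\<epsilon>\<^sup>2 - sq_dist m z (u y\<^sub>0)) * F z)"
    by (intro poly_fun_mult poly_fun_diff poly_fun_const poly_fun_sq_dist F(1))
  from tendsto_sum_poly_fun[OF moments this]
  have "(\<lambda>n. \<Sum>y\<in>A n. (\<epsilon>\<^sup>2 - sq_dist m (w n y) (u y\<^sub>0)) * F (w n y)) \<longlonglongrightarrow> \<epsilon>\<^sup>2 * (\<Sum>y\<in>Y. F (u y))"
    using vanish by (simp add: left_diff_distrib sum_subtractf sum_distrib_left)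
  moreover have "\<epsilon>\<^sup>2 * (\<Sum>y\<in>Y. F (u y)) > 0"
    using pos \<open>\<epsilon> > 0\<close> by simp
  ultimately have "eventually (\<lambda>n. (\<Sum>y\<in>A n. (\<epsilon>\<^sup>2 - sq_dist m (w n y) (u y\<^sub>0)) * F (w n y)) > 0)
      sequentially"
    by (rule order_tendstoD(1))
  then have "eventually (\<lambda>n.
      (\<Sum>y\<in>A n. sq_dist m (w n y) (u y\<^sub>0) * F (w n y)) < \<epsilon>\<^sup>2 * (\<Sum>y\<in>A n. F (w n y))) sequentially"
    by (simp add: left_diff_distrib sum_subtractf sum_distrib_left)
  then show ?thesis
  proof (rule eventually_mono)
    fix n assume "(\<Sum>y\<in>A n. sq_dist m (w n y) (u y\<^sub>0) * F (w n y)) < \<epsilon>\<^sup>2 * (\<Sum>y\<in>A n. F (w n y))"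
    then obtain y where "y \<in> A n" "sq_dist m (w n y) (u y\<^sub>0) < \<epsilon>\<^sup>2"
      using exists_less_if_weighted_sum_less[where B="A n" and F="\<lambda>y. F (w n y)"
          and d="\<lambda>y. sq_dist m (w n y) (u y\<^sub>0)" and \<delta>="\<epsilon>\<^sup>2"] F(2) by blast
    then show "\<exists>y\<in>A n. \<forall>a<m. \<bar>w n y a - u y\<^sub>0 a\<bar> < \<epsilon>"
      using abs_diff_less_if_sq_dist_less \<open>\<epsilon> > 0\<close> by blast
  qed
qed

section \<open>Choice of the roots\<close>

lemma eventually_exists_near_root:
  fixes \<phi> :: "nat \<Rightarrow> fo"
  assumes fin: "\<And>n. finite_graph (V n) (E n)" and lim: "modeling_limit M EL V E"
    and \<xi>: "\<xi> \<in> FO 1" "finite (definable_vertices (space M) EL \<xi>)"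
      "r \<in> definable_vertices (space M) EL \<xi>"
    and fv: "\<And>a. fv (\<phi> a) \<subseteq> {..<P}" and "\<epsilon> > 0"
  shows "eventually (\<lambda>n. \<exists>y\<in>definable_vertices (V n) (E n) \<xi>. \<forall>a<m.
    \<bar>stone_fin (V n) (E n) y P (\<phi> a) - stone_mod M EL r P (\<phi> a)\<bar> < \<epsilon>) sequentially"
proof -
  have "(\<lambda>n. \<Sum>y\<in>definable_vertices (V n) (E n) \<xi>. \<Prod>i\<leftarrow>\<alpha>. stone_fin (V n) (E n) y P (\<phi> i))
      \<longlonglongrightarrow> (\<Sum>y\<in>definable_vertices (space M) EL \<xi>. \<Prod>i\<leftarrow>\<alpha>. stone_mod M EL y P (\<phi> i))" for \<alpha>
  proof -
    have "\<And>\<psi>. \<psi> \<in> set (map \<phi> \<alpha>) \<Longrightarrow> fv \<psi> \<subseteq> {..<P}"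
      using fv by auto
    from tendsto_sum_definable_moments[where \<psi>s="map \<phi> \<alpha>" and P=P, OF lim fin \<xi>(1,2) this]
    show ?thesis
      by (simp add: comp_def)
  qed
  from eventually_near_if_tendsto_moments[where A="\<lambda>n. definable_vertices (V n) (E n) \<xi>"
      and w="\<lambda>n y i. stone_fin (V n) (E n) y P (\<phi> i)" and u="\<lambda>y i. stone_mod M EL y P (\<phi> i)",
      OF \<xi>(2) this \<xi>(3) \<open>\<epsilon> > 0\<close>]
  show ?thesis .
qed

lemma eventually_exists_approximating_root:
  fixes p :: "nat \<Rightarrow> nat" and \<phi> :: "nat \<Rightarrow> fo"
  assumes fin: "\<And>n. finite_graph (V n) (E n)" and lim: "modeling_limit M EL V E"
    and alg: "algebraic_vertex (space M) EL r"
    and rooted: "\<And>a. \<phi> a \<in> FO_rooted (p a)" and "\<epsilon> > 0"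
  shows "eventually (\<lambda>n. \<exists>y\<in>V n. \<forall>a<m.
    \<bar>stone_fin (V n) (E n) y (p a) (\<phi> a) - stone_mod M EL r (p a) (\<phi> a)\<bar> < \<epsilon>) sequentially"
proof -
  obtain \<xi> where \<xi>: "\<xi> \<in> FO 1" "finite (definable_vertices (space M) EL \<xi>)"
    and r: "r \<in> definable_vertices (space M) EL \<xi>"
    using alg unfolding algebraic_vertex_def definable_vertices_def by blast
  have V: "finite (V n)" "V n \<noteq> {}" for n
    using fin by (auto simp: finite_graph_def)
  interpret L: definably_measurable M EL
    using lim by (simp add: modeling_limit_def definably_measurable_modeling)
  define P where "P = (\<Sum>a<m. p a)"
  define \<psi> where "\<psi> a = (if a < m then \<phi> a else FFalse)" for a
  have arity: "fv (\<phi> a) \<subseteq> {..<p a}" "p a \<le> P" if "a < m" for a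
    using rooted[of a] that unfolding P_def by (auto simp: FO_rooted_def intro!: member_le_sum)
  have "fv (\<psi> a) \<subseteq> {..<P}" for a
  proof (cases "a < m")
    case True
    then show ?thesis
      using arity[OF True] by (auto simp: \<psi>_def)
  qed (simp add: \<psi>_def)
  from eventually_exists_near_root[OF fin lim \<xi> r this \<open>\<epsilon> > 0\<close>, of m]
  show ?thesis
  proof (rule eventually_mono)
    fix n assume "\<exists>y\<in>definable_vertices (V n) (E n) \<xi>. \<forall>a<m.
      \<bar>stone_fin (V n) (E n) y P (\<psi> a) - stone_mod M EL r P (\<psi> a)\<bar> < \<epsilon>"
    then obtain y where y: "y \<in> V n"
      and near: "\<And>a. a < m \<Longrightarrow> \<bar>stone_fin (V n) (E n) y P (\<psi> a) - stone_mod M EL r P (\<psi> a)\<bar> < \<epsilon>"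
      unfolding definable_vertices_def by blast
    have "r \<in> space M"
      using r by (simp add: definable_vertices_def)
    have "\<bar>stone_fin (V n) (E n) y (p a) (\<phi> a) - stone_mod M EL r (p a) (\<phi> a)\<bar> < \<epsilon>" if "a < m" for a
      using near[OF that] stone_fin_pad[OF V y arity[OF that]]
        L.stone_mod_pad[OF \<open>r \<in> space M\<close> arity[OF that]]
      by (simp add: \<psi>_def that)
    then show "\<exists>y\<in>V n. \<forall>a<m.
        \<bar>stone_fin (V n) (E n) y (p a) (\<phi> a) - stone_mod M EL r (p a) (\<phi> a)\<bar> < \<epsilon>"
      using y by blast
  qed
qed

lemma diagonal_sequence:
  fixes f :: "nat \<Rightarrow> 'a \<Rightarrow> nat \<Rightarrow> real" and g :: "nat \<Rightarrow> real"
  assumes nonempty: "\<And>n. V n \<noteq> {}"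
    and approx: "\<And>m \<epsilon>. \<epsilon> > 0 \<Longrightarrow> eventually (\<lambda>n. \<exists>y\<in>V n. \<forall>a<m. \<bar>f n y a - g a\<bar> < \<epsilon>) sequentially"
  shows "\<exists>rs. (\<forall>n. rs n \<in> V n) \<and> (\<forall>a. (\<lambda>n. f n (rs n) a) \<longlonglongrightarrow> g a)"
proof -
  define good where "good m n y \<longleftrightarrow> (\<forall>a<m. \<bar>f n y a - g a\<bar> < 1 / (real m + 1))" for m n y
  define level where "level n = Max {m. m \<le> n \<and> (\<exists>y\<in>V n. good m n y)}" for n
  have "level n \<in> {m. m \<le> n \<and> (\<exists>y\<in>V n. good m n y)}" for n
    unfolding level_def using nonempty[of n] by (intro Max_in) (auto simp: good_def)
  then have "\<forall>n. \<exists>y. y \<in> V n \<and> good (level n) n y"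
    by blast
  then obtain rs where rs: "\<And>n. rs n \<in> V n" "\<And>n. good (level n) n (rs n)"
    by metis
  have level_ge: "eventually (\<lambda>n. m \<le> level n) sequentially" for m
  proof -
    obtain N where "\<And>n. n \<ge> N \<Longrightarrow> \<exists>y\<in>V n. good m n y"
      using approx[of "1 / (real m + 1)" m] by (auto simp: good_def eventually_sequentially)
    then have "m \<le> level n" if "n \<ge> max N m" for n
      unfolding level_def using that by (intro Max_ge) auto
    then show ?thesis
      unfolding eventually_sequentially by blast
  qed
  have "(\<lambda>n. f n (rs n) a) \<longlonglongrightarrow> g a" for a
  proof (rule tendstoI)
    fix e :: real assume "e > 0"
    then obtain m0 :: nat where m0: "inverse (real (Suc m0)) < e"
      using reals_Archimedean by blast
    define m where "m = max m0 (Suc a)"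
    have "a < m"
      by (simp add: m_def)
    have "1 / (real m + 1) \<le> 1 / (real m0 + 1)"
      by (simp add: m_def frac_le)
    also have "\<dots> < e"
      using m0 by (simp add: inverse_eq_divide add.commute)
    finally have "1 / (real m + 1) < e" .
    show "eventually (\<lambda>n. dist (f n (rs n) a) (g a) < e) sequentially"
    proof (rule eventually_mono[OF level_ge[of m]])
      fix n assume "m \<le> level n"
      then have "\<bar>f n (rs n) a - g a\<bar> < 1 / (real (level n) + 1)"
        using rs(2)[of n] \<open>a < m\<close> by (simp add: good_def)
      also have "\<dots> \<le> 1 / (real m + 1)"
        using \<open>m \<le> level n\<close> by (simp add: frac_le)
      finally show "dist (f n (rs n) a) (g a) < e"
        using \<open>1 / (real m + 1) < e\<close> by (simp add: dist_real_def)
    qed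
  qed
  then show ?thesis
    using rs(1) by blast
qed

instance tm :: countable
  by countable_datatype

instance fo :: countable
  by countable_datatype

theorem theorem1:
  fixes V :: "nat \<Rightarrow> 'a set" and E :: "nat \<Rightarrow> 'a \<Rightarrow> 'a \<Rightarrow> bool"
    and M :: "'b measure" and EL :: "'b \<Rightarrow> 'b \<Rightarrow> bool" and r :: 'b
  assumes "\<And>n. finite_graph (V n) (E n)"
    and "FO_convergent V E"
    and "modeling_limit M EL V E"
    and "r \<in> space M"
    and "algebraic_vertex (space M) EL r"
  shows "\<exists>rs :: nat \<Rightarrow> 'a. (\<forall>n. rs n \<in> V n) \<and>
           (\<forall>p. \<forall>\<phi>\<in>FO_rooted p.
              (\<lambda>n. stone_fin (V n) (E n) (rs n) p \<phi>) \<longlonglongrightarrow> stone_mod M EL r p \<phi>)"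
proof -
  define test :: "nat \<Rightarrow> nat \<times> fo" where
    "test a = (let x = from_nat a in if snd x \<in> FO_rooted (fst x) then x else (0, FFalse))" for a
  have "snd (test a) \<in> FO_rooted (fst (test a))" for a
    by (simp add: test_def Let_def FO_rooted_def)
  note approx = eventually_exists_approximating_root[where p="\<lambda>a. fst (test a)"
      and \<phi>="\<lambda>a. snd (test a)", OF assms(1,3,5) this]
  have "V n \<noteq> {}" for n
    using assms(1) by (simp add: finite_graph_def)
  from diagonal_sequence[OF this approx]
  obtain rs where rs: "\<And>n. rs n \<in> V n"
    and lim: "\<And>a. (\<lambda>n. stone_fin (V n) (E n) (rs n) (fst (test a)) (snd (test a)))
      \<longlonglongrightarrow> stone_mod M EL r (fst (test a)) (snd (test a))"
    by blast
  have "(\<lambda>n. stone_fin (V n) (E n) (rs n) p \<phi>) \<longlonglongrightarrow> stone_mod M EL r p \<phi>" if "\<phi> \<in> FO_rooted p" for p \<phi>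
    using lim[of "to_nat (p, \<phi>)"] that by (simp add: test_def)
  then show ?thesis
    using rs by blast
qed

end
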